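(* Let $\mathcal V$ be a finite vocabulary and $C\ge 2$ an integer. For each $i\in\{1,\dots,C\}$ let $w_i:\mathcal V\to\mathbb R$ be arbitrary maps such that there exist $\tau\in\mathcal V$ and $i\in\{2,\dots,C\}$ with $w_i(\tau)\neq 0$, and let $b\in\mathbb R$. Then for every number of layers $L\ge 1$ and heads $H\ge1$, there is no parametrization of an $L$-layer transformer $F$ (encoder-only or decoder-only) such that $F(\mathbf t)=b+\sum_{i=1}^{|\mathbf t|} w_i(t_i)$ for every sequence $\mathbf t$ over $\mathcal V$ with $1\le|\mathbf t|\le C$.
   Context: Let $\mathcal V$ be a finite vocabulary and $C\ge 2$ the context length; inputs are sequences $\mathbf t=[t_1,\dots,t_{|\mathbf t|}]$ with $t_i\in\mathcal V$ and $1\le|\mathbf t|\le C$. An $L$-layer transformer (without positional embeddings) with embedding dimension $d$, head dimension $d_h$ and $H\ge 1$ heads per layer is specified by: an embedding map $e:\mathcal V\to\mathbb R^d$; for each layer $l\in\{1,\dots,L\}$ and head $h\in\{1,\dots,H\}$, matrices $W_Q^{(l,h)},W_K^{(l,h)},W_V^{(l,h)}\in\mathbb R^{d\times d_h}$, vectors $b_Q^{(l,h)},b_K^{(l,h)},b_V^{(l,h)}\in\mathbb R^{d_h}$ and a linear map $P_{l,h}:\mathbb R^{d_h}\to\mathbb R^d$; for each layer an arbitrary function $\mathrm{ffn}_l:\mathbb R^d\to\mathbb R^d$; and an arbitrary classification head $\mathrm{cls}:\mathbb R^d\to\mathbb R^2$. A parametrization is any choice of all these objects. On input $\mathbf t$,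 set $h_i^{(0)}=e(t_i)$. In layer $l$, for each head $h$ compute $q_i=(W_Q^{(l,h)})^\top h_i^{(l-1)}+b_Q^{(l,h)}$, $k_i=(W_K^{(l,h)})^\top h_i^{(l-1)}+b_K^{(l,h)}$, $v_i=(W_V^{(l,h)})^\top h_i^{(l-1)}+b_V^{(l,h)}$; attention weights $a_{ij}=\exp(q_i^\top k_j/\sqrt{d_h})/\sum_{j'\in J_i}\exp(q_i^\top k_{j'}/\sqrt{d_h})$ for $j\in J_i$ and $a_{ij}=0$ for $j\notin J_i$, where $J_i=\{1,\dots,|\mathbf t|\}$ for an encoder-only model and $J_i=\{1,\dots,i\}$ for a decoder-only model (causal mask); head output $s_i^{(h)}=\sum_{j} a_{ij}v_j$. Then $h_i^{(l)}=\mathrm{ffn}_l\big(h_i^{(l-1)}+\sum_{h=1}^H P_{l,h}(s_i^{(h)})\big)$. The output (log odds) is $F(\mathbf t)=\Delta(\mathrm{cls}(h_r^{(L)}))$, where $\Delta(\ell)=\ell_1-\ell_0$ for $\ell=(\ell_0,\ell_1)\in\mathbb R^2$, and $r=1$ for encoder-only models, $r=|\mathbf t|$ for decoder-only models. *)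

theory Defs
  imports "HOL-Analysis.Analysis"
begin

text \<open>Transformer without positional embeddings. Embedding dimension d = CARD('d),
  head dimension d_h = CARD('h). Layers are indexed 1..L, heads 0..H-1 (i.e. H heads),
  sequence positions are 0-indexed internally. A d x d_h matrix W is represented as
  real^'h^'d (d rows, d_h columns), so W^T x is  x v* W. The linear map P_{l,h} from
  R^{d_h} to R^d is represented by its matrix in real^'h^'d, applied as  P *v s.\<close>

record ('v, 'd, 'h) tparams =
  emb :: "'v \<Rightarrow> real^'d"
  WQ :: "nat \<Rightarrow> nat \<Rightarrow> real^'h^'d"
  WK :: "nat \<Rightarrow> nat \<Rightarrow> real^'h^'d"
  WV :: "nat \<Rightarrow> nat \<Rightarrow> real^'h^'d"
  bQ :: "nat \<Rightarrow> nat \<Rightarrow> real^'h"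
  bK :: "nat \<Rightarrow> nat \<Rightarrow> real^'h"
  bV :: "nat \<Rightarrow> nat \<Rightarrow> real^'h"
  Pm :: "nat \<Rightarrow> nat \<Rightarrow> real^'h^'d"
  ffn :: "nat \<Rightarrow> real^'d \<Rightarrow> real^'d"
  cls :: "real^'d \<Rightarrow> real \<times> real"

definition att_set :: "bool \<Rightarrow> nat \<Rightarrow> nat \<Rightarrow> nat set" where
  "att_set causal n i = (if causal then {0..i} else {0..<n})"

definition head_out ::
  "bool \<Rightarrow> real^'h^'d \<Rightarrow> real^'h^'d \<Rightarrow> real^'h^'d \<Rightarrow> real^'h \<Rightarrow> real^'h \<Rightarrow> real^'h
   \<Rightarrow> (real^'d) list \<Rightarrow> nat \<Rightarrow> real^'h" where
  "head_out causal Wq Wk Wv bq bk bv hs i =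
     (let n = length hs;
          q = (\<lambda>j. hs ! j v* Wq + bq);
          k = (\<lambda>j. hs ! j v* Wk + bk);
          v = (\<lambda>j. hs ! j v* Wv + bv);
          sc = (\<lambda>j. exp ((q i \<bullet> k j) / sqrt (real CARD('h))));
          J = att_set causal n i
      in (\<Sum>j\<in>J. (sc j / (\<Sum>j'\<in>J. sc j')) *\<^sub>R v j))"

definition layer :: "bool \<Rightarrow> nat \<Rightarrow> ('v, 'd::finite, 'h::finite) tparams \<Rightarrow> nat
   \<Rightarrow> (real^'d) list \<Rightarrow> (real^'d) list" where
  "layer causal H p l hs =
     map (\<lambda>i. ffn p l (hs ! i + (\<Sum>h<H. Pm p l h *v
            head_out causal (WQ p l h) (WK p l h) (WV p l h) (bQ p l h) (bK p l h) (bV p l h) hs i)))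
         [0..<length hs]"

primrec hidden :: "bool \<Rightarrow> nat \<Rightarrow> ('v, 'd::finite, 'h::finite) tparams \<Rightarrow> nat \<Rightarrow> 'v list \<Rightarrow> (real^'d) list" where
  "hidden causal H p 0 t = map (emb p) t"
| "hidden causal H p (Suc l) t = layer causal H p (Suc l) (hidden causal H p l t)"

definition logit_diff :: "real \<times> real \<Rightarrow> real" where
  "logit_diff lg = snd lg - fst lg"

text \<open>Output F(t): causal = False is encoder-only (read position 1),
  causal = True is decoder-only (read position |t|).\<close>
definition transformer_out :: "bool \<Rightarrow> nat \<Rightarrow> nat \<Rightarrow> ('v, 'd::finite, 'h::finite) tparams \<Rightarrow> 'v list \<Rightarrow> real" where
  "transformer_out causal L H p t =
     (let r = (if causal then length t - 1 else 0)
      in logit_diff (cls p (hidden causal H p L t ! r)))"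

end

theory Submission
  imports Defs
begin

text \<open>Without positional embeddings a transformer cannot count: on a constant sequence
  \<open>\<tau>\<^sup>n\<close> every attention head averages identical value vectors, so all positions carry the
  same hidden state as on the single token \<open>[\<tau>]\<close>, and \<open>F(\<tau>\<^sup>n)\<close> does not depend on \<open>n\<close>.
  The target value on \<open>\<tau>\<^sup>n\<close>, however, changes by \<open>w n \<tau>\<close> from \<open>n - 1\<close> to \<open>n\<close>.\<close>

lemma sum_normalized_weights_scaleR:
  fixes v :: "'a::real_vector"
  assumes "(\<Sum>j\<in>J. f j) \<noteq> 0"
  shows "(\<Sum>j\<in>J. (f j / (\<Sum>j'\<in>J. f j')) *\<^sub>R v) = v"
proof -
  have "(\<Sum>j\<in>J. (f j / (\<Sum>j'\<in>J. f j')) *\<^sub>R v) = ((\<Sum>j\<in>J. f j) / (\<Sum>j'\<in>J. f j')) *\<^sub>R v"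
    by (simp only: scaleR_sum_left sum_divide_distrib)
  then show ?thesis using assms by simp
qed

lemma head_out_replicate:
  assumes "i < n"
  shows "head_out causal Wq Wk Wv bq bk bv (replicate n x) i = x v* Wv + bv"
proof -
  define c where "c = exp (((x v* Wq + bq) \<bullet> (x v* Wk + bk)) / sqrt (real CARD('h)))"
  define J where "J = att_set causal n i"
  have J_bound: "\<And>j. j \<in> J \<Longrightarrow> j < n"
    using assms by (auto simp: J_def att_set_def split: if_splits)
  have "finite J" "J \<noteq> {}" using assms by (auto simp: J_def att_set_def)
  then have "(\<Sum>j\<in>J. c) \<noteq> 0" by (simp add: c_def)
  have "head_out causal Wq Wk Wv bq bk bv (replicate n x) i
      = (\<Sum>j\<in>J. (c / (\<Sum>j'\<in>J. c)) *\<^sub>R (x v* Wv + bv))"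
    unfolding head_out_def Let_def length_replicate J_def[symmetric]
    using J_bound assms by (intro sum.cong) (simp_all add: c_def)
  also have "\<dots> = x v* Wv + bv"
    by (rule sum_normalized_weights_scaleR) fact
  finally show ?thesis .
qed

lemma layer_replicate:
  "layer causal H p l (replicate n x) =
     replicate n (ffn p l (x + (\<Sum>h<H. Pm p l h *v (x v* WV p l h + bV p l h))))"
  unfolding layer_def by (rule nth_equalityI) (auto simp: head_out_replicate)

lemma hidden_replicate:
  "hidden causal H p l (replicate n \<tau>) = replicate n (hidden causal H p l [\<tau>] ! 0)"
proof (induction l arbitrary: n)
  case 0
  then show ?case by simp
next
  case (Suc l)
  have "hidden causal H p (Suc l) [\<tau>] =
      layer causal H p (Suc l) (replicate 1 (hidden causal H p l [\<tau>] ! 0))"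
    using Suc.IH[of 1] by simp
  then show ?case using Suc.IH by (simp add: layer_replicate del: replicate_Suc)
qed

lemma transformer_out_replicate:
  assumes "n \<ge> 1"
  shows "transformer_out causal L H p (replicate n \<tau>) = transformer_out causal L H p [\<tau>]"
  using assms unfolding transformer_out_def Let_def hidden_replicate by simp

lemma term_eq_zero_if_partial_sums_const:
  fixes f :: "nat \<Rightarrow> 'a::ab_group_add"
  assumes "\<And>n. 1 \<le> n \<Longrightarrow> n \<le> C \<Longrightarrow> (\<Sum>k<n. f k) = s"
    and "1 \<le> m" "m < C"
  shows "f m = 0"
  using assms(1)[of m] assms(1)[of "Suc m"] assms(2,3) by simp

theorem corollary4p3:
  fixes w :: "nat \<Rightarrow> 'v::finite \<Rightarrow> real"
    and b :: real and C L H :: nat and causal :: bool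
  assumes "C \<ge> 2"
    and "\<exists>\<tau> i. 2 \<le> i \<and> i \<le> C \<and> w i \<tau> \<noteq> 0"
    and "L \<ge> 1" and "H \<ge> 1"
  shows "\<not> (\<exists>p :: ('v, 'd::finite, 'h::finite) tparams.
            \<forall>t :: 'v list. 1 \<le> length t \<and> length t \<le> C \<longrightarrow>
              transformer_out causal L H p t = b + (\<Sum>i<length t. w (i + 1) (t ! i)))"
proof
  assume "\<exists>p :: ('v, 'd::finite, 'h::finite) tparams.
            \<forall>t :: 'v list. 1 \<le> length t \<and> length t \<le> C \<longrightarrow>
              transformer_out causal L H p t = b + (\<Sum>i<length t. w (i + 1) (t ! i))"
  then obtain p :: "('v, 'd, 'h) tparams" where p:
    "\<And>t. 1 \<le> length t \<Longrightarrow> length t \<le> C \<Longrightarrow>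
       transformer_out causal L H p t = b + (\<Sum>i<length t. w (i + 1) (t ! i))"
    by blast
  obtain \<tau> i where i: "2 \<le> i" "i \<le> C" "w i \<tau> \<noteq> 0" using assms(2) by blast
  have "(\<Sum>k<n. w (k + 1) \<tau>) = transformer_out causal L H p [\<tau>] - b"
    if "1 \<le> n" "n \<le> C" for n
    using p[of "replicate n \<tau>"] that by (simp add: transformer_out_replicate)
  moreover have "1 \<le> i - 1" "i - 1 < C" using i by auto
  ultimately have "w (i - 1 + 1) \<tau> = 0"
    by (rule term_eq_zero_if_partial_sums_const[where f = "\<lambda>k. w (k + 1) \<tau>"])
  with i show False by simp
qed

end
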